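(* For $k,d\in\mathbb{Z}_{\ge0}$ let $M^o_{k,d}$ (resp. $M^e_{k,d}$) be the set of triples $(m,\mathbf{k},\mathbf{l})$ with $m\in\mathbb{Z}_{\ge0}$, $\mathbf{k}=(k_1,\dots,k_n)$, $\mathbf{l}=(l_1,\dots,l_n)$, $0\le n\le k$, $m+k_1+\dots+k_n=k$, $k_u\ge2$, $l_u\ge0$, $k_u-1-l_u\ge1$, such that $s:=\sum_u(k_u-1-l_u)$ satisfies $s\le d$ and $s$ odd (resp. even; $n=0$ gives $s=0$). Then $|M^o_{0,d}|=|M^o_{1,d}|=0$, $|M^e_{0,d}|=|M^e_{1,d}|=1$, and for $k\ge2$, $d\ge1$, \[|M^o_{k,d}|=|M^o_{k-1,d}|+|M^e_{k-1,d-1}|,\qquad |M^e_{k,d}|=|M^e_{k-1,d}|+|M^o_{k-1,d-1}|.\] In particular $|M^o_{0,0}|=|M^o_{1,1}|=0$, $|M^e_{0,0}|=|M^e_{1,1}|=1$, and $|M^o_{k,k}|=|M^e_{k,k}|=2^{k-2}$ for $k\ge2$.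
   Context: In the paper each triple $(m,\mathbf{k},\mathbf{l})$ represents the number $\sigma^m\mathrm{Ls}_{\mathbf{k}}^{\mathbf{l}}(\sigma)$, where $\mathrm{Ls}_{\mathbf{k}}^{\mathbf{l}}(\sigma)=(-1)^n\int_0^{\sigma}\int_0^{\theta_n}\cdots\int_0^{\theta_2}\prod_u\theta_u^{l_u}(\log|2\sin(\theta_u/2)|)^{k_u-1-l_u}\,d\theta_1\cdots d\theta_n$ for a fixed real $\sigma$. *)

theory Defs
  imports Main
begin

definition sval :: "nat list \<Rightarrow> nat list \<Rightarrow> int" where
  "sval ks ls = (\<Sum>u<length ks. int (ks ! u) - 1 - int (ls ! u))"

definition Mset :: "bool \<Rightarrow> nat \<Rightarrow> nat \<Rightarrow> (nat \<times> nat list \<times> nat list) set" where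
  "Mset p k d = {(m, ks, ls). length ls = length ks \<and> length ks \<le> k \<and>
      m + sum_list ks = k \<and>
      (\<forall>u<length ks. ks ! u \<ge> 2 \<and> int (ks ! u) - 1 - int (ls ! u) \<ge> 1) \<and>
      sval ks ls \<le> int d \<and> odd (sval ks ls) = p}"

abbreviation Mo :: "nat \<Rightarrow> nat \<Rightarrow> (nat \<times> nat list \<times> nat list) set" where
  "Mo k d \<equiv> Mset True k d"

abbreviation Me :: "nat \<Rightarrow> nat \<Rightarrow> (nat \<times> nat list \<times> nat list) set" where
  "Me k d \<equiv> Mset False k d"

end

theory Submission
  imports Defs
begin

(* Split M_{k,d} according to whether m > 0. The triples with m > 0 are those of M_{k-1,d}
   with m raised by one. For m = 0 look at the first block (k_1, l_1): lowering k_1 by one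
   lowers both k and s by one, flipping the parity of s; when this would make
   k_1 - 1 - l_1 = 0, the block is dropped instead and its remaining weight k_1 - 1 becomes m.
   This is a bijection onto M_{k-1,d-1} of the opposite parity; its inverse raises k_1 when
   m = 0 and otherwise prepends the block (m + 1, m - 1). On the diagonal the bound s <= d is
   vacuous because s <= k, so both counts double from one k to the next. *)

lemma sval_Nil [simp]: "sval [] ls = 0"
  by (simp add: sval_def)

lemma sval_Cons [simp]: "sval (k # ks) (l # ls) = int k - 1 - int l + sval ks ls"
  unfolding sval_def length_Cons sum.lessThan_Suc_shift by simp

lemma sval_le_sum_list: "sval ks ls \<le> int (sum_list ks)"
proof -
  have "sval ks ls \<le> (\<Sum>u<length ks. int (ks ! u))"
    unfolding sval_def by (rule sum_mono) auto
  also have "\<dots> = int (sum_list ks)"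
    by (simp add: sum_list_sum_nth atLeast0LessThan)
  finally show ?thesis .
qed

lemma length_le_sum_list:
  assumes "list_all2 (\<lambda>k l. l + 2 \<le> k) ks ls"
  shows "length ks \<le> sum_list ks"
  using assms by (induction ks ls rule: list_all2_induct) auto

lemma mem_Mset_iff:
  "(m, ks, ls) \<in> Mset p k d \<longleftrightarrow>
     list_all2 (\<lambda>k l. l + 2 \<le> k) ks ls \<and> m + sum_list ks = k \<and>
     sval ks ls \<le> int d \<and> odd (sval ks ls) = p"
  using length_le_sum_list[of ks ls]
  by (auto simp: Mset_def list_all2_conv_all_nth)

lemma finite_Mset: "finite (Mset p k d)"
proof (rule finite_subset)
  let ?L = "{xs. set xs \<subseteq> {..k} \<and> length xs \<le> k}"
  show "Mset p k d \<subseteq> {..k} \<times> ?L \<times> ?L"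
  proof
    fix y assume "y \<in> Mset p k d"
    moreover obtain m ks ls where y: "y = (m, ks, ls)"
      by (cases y)
    ultimately have blocks: "list_all2 (\<lambda>k l. l + 2 \<le> k) ks ls" and sum: "m + sum_list ks = k"
      by (auto simp: mem_Mset_iff)
    have "set ks \<subseteq> {..k}"
      using member_le_sum_list sum by fastforce
    moreover have "set ls \<subseteq> {..k}"
      using blocks \<open>set ks \<subseteq> {..k}\<close>
      by (fastforce simp: list_all2_conv_all_nth in_set_conv_nth)
    moreover have "length ks \<le> k"
      using length_le_sum_list[OF blocks] sum by linarith
    ultimately show "y \<in> {..k} \<times> ?L \<times> ?L"
      using list_all2_lengthD[OF blocks] sum y by auto
  qed
  show "finite ({..k} \<times> ?L \<times> ?L)"
    by (intro finite_cartesian_product finite_lists_length_le) auto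
qed

lemma Mset_le_1:
  assumes "k \<le> 1"
  shows "Mset p k d = (if p then {} else {(k, [], [])})"
proof -
  have "(m, ks, ls) \<in> Mset p k d \<longleftrightarrow> \<not> p \<and> (m, ks, ls) = (k, [], [])" for m ks ls
  proof
    assume member: "(m, ks, ls) \<in> Mset p k d"
    then have "ks = [] \<and> ls = []"
      using assms by (cases ks; cases ls) (auto simp: mem_Mset_iff list_all2_Cons1)
    with member show "\<not> p \<and> (m, ks, ls) = (k, [], [])"
      by (auto simp: mem_Mset_iff)
  qed (auto simp: mem_Mset_iff)
  then show ?thesis
    by auto
qed

lemma Mset_stable:
  assumes "k \<le> d"
  shows "Mset p k d = Mset p k k"
proof -
  have "m + sum_list ks = k \<Longrightarrow> sval ks ls \<le> int k" for m ks ls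
    using sval_le_sum_list[of ks ls] by linarith
  then show ?thesis
    using assms by (force simp: mem_Mset_iff)
qed

lemma Mset_Suc_fst_nonzero:
  "{x \<in> Mset p (Suc k) d. fst x \<noteq> 0} = apfst Suc ` Mset p k d"
proof (rule set_eqI)
  fix x :: "nat \<times> nat list \<times> nat list"
  obtain m ks ls where x: "x = (m, ks, ls)"
    by (cases x)
  show "x \<in> {x \<in> Mset p (Suc k) d. fst x \<noteq> 0} \<longleftrightarrow> x \<in> apfst Suc ` Mset p k d"
    unfolding x
    by (cases m) (auto simp: mem_Mset_iff intro!: image_eqI[where x = "(m - 1, ks, ls)"])
qed

lemma Mset_Suc_fst_zeroE:
  assumes "x \<in> Mset p (Suc k) d" "fst x = 0"
  obtains a ks b ls where "x = (0, a # ks, b # ls)"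
proof -
  obtain ks ls where x: "x = (0, ks, ls)"
    using assms(2) by (cases x) auto
  with assms(1) have "ks \<noteq> []" "list_all2 (\<lambda>k l. l + 2 \<le> k) ks ls"
    by (auto simp: mem_Mset_iff)
  then show ?thesis
    using that x by (auto simp: neq_Nil_conv list_all2_Cons1)
qed

fun lower_head :: "nat \<times> nat list \<times> nat list \<Rightarrow> nat \<times> nat list \<times> nat list" where
  "lower_head (m, k # ks, l # ls) =
     (if k = l + 2 then (k - 1, ks, ls) else (m, (k - 1) # ks, l # ls))"
| "lower_head x = x"

fun raise_head :: "nat \<times> nat list \<times> nat list \<Rightarrow> nat \<times> nat list \<times> nat list" where
  "raise_head (0, k # ks, ls) = (0, Suc k # ks, ls)"
| "raise_head (Suc m, ks, ls) = (0, Suc (Suc m) # ks, m # ls)"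
| "raise_head x = x"

lemma lower_head_in_Mset:
  assumes "x \<in> Mset p (Suc k) (Suc d)" "fst x = 0"
  shows "lower_head x \<in> Mset (\<not> p) k d"
proof -
  obtain a ks b ls where x: "x = (0, a # ks, b # ls)"
    using assms by (rule Mset_Suc_fst_zeroE)
  show ?thesis
    using assms unfolding x by (cases "a = b + 2") (auto simp: mem_Mset_iff of_nat_diff)
qed

lemma raise_lower_head:
  assumes "x \<in> Mset p (Suc k) d" "fst x = 0"
  shows "raise_head (lower_head x) = x"
proof -
  obtain a ks b ls where x: "x = (0, a # ks, b # ls)"
    using assms by (rule Mset_Suc_fst_zeroE)
  show ?thesis
    using assms unfolding x by (cases a) (auto simp: mem_Mset_iff list_all2_Cons1)
qed

lemma raise_head_in_Mset:
  assumes "1 \<le> k" "x \<in> Mset p k d"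
  shows "raise_head x \<in> Mset (\<not> p) (Suc k) (Suc d)"
  using assms by (cases x rule: raise_head.cases) (auto simp: mem_Mset_iff list_all2_Cons1)

lemma fst_raise_head: "fst (raise_head x) = 0"
  by (cases x rule: raise_head.cases) auto

lemma lower_raise_head:
  assumes "1 \<le> k" "x \<in> Mset p k d"
  shows "lower_head (raise_head x) = x"
  using assms by (cases x rule: raise_head.cases) (auto simp: mem_Mset_iff list_all2_Cons1)

lemma bij_betw_lower_head:
  assumes "1 \<le> k"
  shows "bij_betw lower_head {x \<in> Mset p (Suc k) (Suc d). fst x = 0} (Mset (\<not> p) k d)"
  by (rule bij_betw_byWitness[where f' = raise_head])
    (use assms raise_head_in_Mset[of k _ "\<not> p" d] in
      \<open>auto simp: lower_head_in_Mset raise_lower_head fst_raise_head lower_raise_head\<close>)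

lemma card_Mset_Suc:
  assumes "1 \<le> k"
  shows "card (Mset p (Suc k) (Suc d)) = card (Mset p k (Suc d)) + card (Mset (\<not> p) k d)"
proof -
  let ?A = "Mset p (Suc k) (Suc d)"
  have "card ?A = card {x \<in> ?A. fst x \<noteq> 0} + card {x \<in> ?A. fst x = 0}"
    using card_Int_Diff[OF finite_Mset, of p "Suc k" "Suc d" "{x. fst x \<noteq> 0}"]
    unfolding Int_def set_diff_eq by simp
  also have "card {x \<in> ?A. fst x \<noteq> 0} = card (Mset p k (Suc d))"
    unfolding Mset_Suc_fst_nonzero by (rule card_image, rule inj_on_subset[OF _ subset_UNIV]) simp
  also have "card {x \<in> ?A. fst x = 0} = card (Mset (\<not> p) k d)"
    by (rule bij_betw_same_card[OF bij_betw_lower_head[OF assms]])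
  finally show ?thesis .
qed

lemma card_Mset_diagonal: "2 \<le> k \<Longrightarrow> card (Mset p k k) = 2 ^ (k - 2)"
proof (induction k arbitrary: p rule: dec_induct)
  case base
  show ?case
    using card_Mset_Suc[of 1 p 1] by (simp add: numeral_2_eq_2 Mset_le_1)
next
  case (step n)
  have "card (Mset p (Suc n) (Suc n)) = card (Mset p n n) + card (Mset (\<not> p) n n)"
    using card_Mset_Suc[of n p n] step.hyps Mset_stable[of n "Suc n"] by simp
  also have "\<dots> = 2 ^ (Suc n - 2)"
    using step by (metis Suc_diff_le mult_2 power_Suc)
  finally show ?case .
qed

theorem theorem9:
  shows "(\<forall>d. card (Mo 0 d) = 0 \<and> card (Mo 1 d) = 0 \<and> card (Me 0 d) = 1 \<and> card (Me 1 d) = 1)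
    \<and> (\<forall>k d. k \<ge> 2 \<longrightarrow> d \<ge> 1 \<longrightarrow>
          card (Mo k d) = card (Mo (k - 1) d) + card (Me (k - 1) (d - 1)) \<and>
          card (Me k d) = card (Me (k - 1) d) + card (Mo (k - 1) (d - 1)))
    \<and> card (Mo 0 0) = 0 \<and> card (Mo 1 1) = 0 \<and> card (Me 0 0) = 1 \<and> card (Me 1 1) = 1
    \<and> (\<forall>k. k \<ge> 2 \<longrightarrow> card (Mo k k) = 2 ^ (k - 2) \<and> card (Me k k) = 2 ^ (k - 2))"
proof (intro conjI allI impI)
  fix k d :: nat assume "k \<ge> 2" "d \<ge> 1"
  then show "card (Mo k d) = card (Mo (k - 1) d) + card (Me (k - 1) (d - 1))"
    and "card (Me k d) = card (Me (k - 1) d) + card (Mo (k - 1) (d - 1))"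
    using card_Mset_Suc[of "k - 1" _ "d - 1"] by simp_all
qed (simp_all add: Mset_le_1 card_Mset_diagonal)

end
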